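(* Let $\alpha: I\to M$ be a unit-speed curve on an oriented surface $M\subset E^3$ with Darboux frame $\{T,V,U\}$ and curvatures $k_g,k_n,\tau_g$. Consider the curve $\gamma$ defined in either of the following two cases: (a) $k_g\equiv0$, $c_{10},c_{11}$ real constants, and $\gamma(s)=\alpha(s)+(c_{10}-s)T(s)+c_{11}V(s)$; (b) $k_g$ nowhere zero, $\theta$ an antiderivative of $k_g$, $S$ and $C$ antiderivatives of $\sin\theta$ and $\cos\theta$ respectively, $c_{12},c_{13}$ real constants, $$y_2=c_{12}\cos\theta+c_{13}\sin\theta-S\cos\theta+C\sin\theta,\qquad y_1=-\sin\theta\,(S-c_{12})-\cos\theta\,(C+c_{13}),$$ and $\gamma(s)=\alpha(s)+y_1(s)T(s)+y_2(s)V(s)$. In either case assume $\gamma$ is regular. Then $\gamma$ is a general helix if and only if $\alpha$ is an isophote curve on $M$.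
   Context: $M$ is an oriented surface in Euclidean 3-space $E^3$ and $\alpha:I\to M$ is a unit-speed curve with arc-length parameter $s$. Its Darboux frame $\{T,V,U\}$ consists of the unit tangent $T=\alpha'$, the unit surface normal $U$ of $M$ along $\alpha$, and $V=U\times T$; it satisfies $T'=k_gV+k_nU$, $V'=-k_gT+\tau_gU$, $U'=-k_nT-\tau_gV$, where $k_g,k_n,\tau_g$ are the geodesic curvature, normal curvature and geodesic torsion. A regular curve is a general helix if its unit tangent makes a constant angle with a fixed direction. $\alpha$ is an isophote curve if $\langle U,l\rangle$ is constant for some fixed unit vector $l$. *)

theory Defs
  imports "HOL-Analysis.Analysis"
begin

text \<open>Darboux frame of a unit-speed curve alpha on an oriented surface, abstracted
  via its frame data: T = alpha', U = unit surface normal along alpha, V = U x T,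
  with the Darboux equations and (continuous) curvatures kg, kn, tg on the open interval I.\<close>
definition darboux_frame ::
  "real set \<Rightarrow> (real \<Rightarrow> real^3) \<Rightarrow> (real \<Rightarrow> real^3) \<Rightarrow> (real \<Rightarrow> real^3) \<Rightarrow> (real \<Rightarrow> real^3)
   \<Rightarrow> (real \<Rightarrow> real) \<Rightarrow> (real \<Rightarrow> real) \<Rightarrow> (real \<Rightarrow> real) \<Rightarrow> bool" where
  "darboux_frame I \<alpha> T V U kg kn tg \<longleftrightarrow>
     continuous_on I kg \<and> continuous_on I kn \<and> continuous_on I tg \<and>
     (\<forall>s\<in>I.
        (\<alpha> has_vector_derivative T s) (at s) \<and>
        norm (T s) = 1 \<and> norm (U s) = 1 \<and> inner (T s) (U s) = 0 \<and>
        V s = cross3 (U s) (T s) \<and>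
        (T has_vector_derivative (kg s *\<^sub>R V s + kn s *\<^sub>R U s)) (at s) \<and>
        (V has_vector_derivative (- kg s *\<^sub>R T s + tg s *\<^sub>R U s)) (at s) \<and>
        (U has_vector_derivative (- kn s *\<^sub>R T s - tg s *\<^sub>R V s)) (at s))"

definition regular_curve :: "real set \<Rightarrow> (real \<Rightarrow> real^3) \<Rightarrow> bool" where
  "regular_curve I \<gamma> \<longleftrightarrow>
     (\<forall>s\<in>I. \<gamma> differentiable (at s) \<and> vector_derivative \<gamma> (at s) \<noteq> 0)"

definition general_helix :: "real set \<Rightarrow> (real \<Rightarrow> real^3) \<Rightarrow> bool" where
  "general_helix I \<gamma> \<longleftrightarrow> regular_curve I \<gamma> \<and>
     (\<exists>d c. norm d = 1 \<and>
        (\<forall>s\<in>I. inner ((1 / norm (vector_derivative \<gamma> (at s))) *\<^sub>R vector_derivative \<gamma> (at s)) d = c))"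

definition isophote :: "real set \<Rightarrow> (real \<Rightarrow> real^3) \<Rightarrow> bool" where
  "isophote I U \<longleftrightarrow> (\<exists>l c. norm l = 1 \<and> (\<forall>s\<in>I. inner (U s) l = c))"

end

theory Submission
  imports Defs
begin

text \<open>In both cases \<open>\<gamma> = \<alpha> + y\<^sub>1 T + y\<^sub>2 V\<close> with coefficients solving
  \<open>y\<^sub>1' = k\<^sub>g y\<^sub>2 - 1\<close>, \<open>y\<^sub>2' = -k\<^sub>g y\<^sub>1\<close> (in case (a) \<open>y\<^sub>1 = c\<^sub>1\<^sub>0 - s\<close>, \<open>y\<^sub>2 = c\<^sub>1\<^sub>1\<close>).
  By the Darboux equations the \<open>T\<close>- and \<open>V\<close>-components of \<open>\<gamma>'\<close> then cancel, so
  \<open>\<gamma>' = (y\<^sub>1 k\<^sub>n + y\<^sub>2 \<tau>\<^sub>g) U\<close>. The factor is continuous and, \<open>\<gamma>\<close> being regular, nowhere zero,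
  so it has constant sign on the interval and the unit tangent of \<open>\<gamma>\<close> is \<open>\<plusminus>U\<close> throughout.
  Hence the unit tangent of \<open>\<gamma>\<close> has constant inner product with a fixed direction
  exactly when \<open>U\<close> has.\<close>

lemma continuous_on_nonzero_sign_cases:
  fixes f :: "real \<Rightarrow> real"
  assumes "is_interval I" "continuous_on I f" "\<forall>s\<in>I. f s \<noteq> 0"
  shows "(\<forall>s\<in>I. f s > 0) \<or> (\<forall>s\<in>I. f s < 0)"
proof (rule ccontr)
  assume "\<not> ?thesis"
  then obtain a b where ab: "a \<in> I" "b \<in> I" "f a < 0" "f b > 0"
    using assms(3) by (meson linorder_neqE_linordered_idom)
  have "connected (f ` I)"
    using assms(1,2) connected_continuous_image is_interval_connected by blast
  then have "0 \<in> f ` I"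
    using ab unfolding connected_iff_interval by (metis image_eqI less_eq_real_def)
  then show False
    using assms(3) by auto
qed

lemma general_helix_iff_isophote_if_normal_velocity:
  fixes \<gamma> U :: "real \<Rightarrow> real^3" and f :: "real \<Rightarrow> real"
  assumes "is_interval I" "continuous_on I f"
    and unit: "\<forall>s\<in>I. norm (U s) = 1"
    and velocity: "\<forall>s\<in>I. vector_derivative \<gamma> (at s) = f s *\<^sub>R U s"
    and reg: "regular_curve I \<gamma>"
  shows "general_helix I \<gamma> \<longleftrightarrow> isophote I U"
proof -
  let ?tangent = "\<lambda>s. (1 / norm (vector_derivative \<gamma> (at s))) *\<^sub>R vector_derivative \<gamma> (at s)"
  have "\<forall>s\<in>I. f s \<noteq> 0"
    using reg velocity unfolding regular_curve_def by auto
  then consider "\<forall>s\<in>I. f s > 0" | "\<forall>s\<in>I. f s < 0"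
    using continuous_on_nonzero_sign_cases[OF assms(1,2)] by blast
  then obtain \<sigma> :: real where \<sigma>: "\<sigma> = 1 \<or> \<sigma> = -1" and tangent: "\<forall>s\<in>I. ?tangent s = \<sigma> *\<^sub>R U s"
  proof cases
    case 1
    show ?thesis
      by (rule that[of 1]) (use 1 unit velocity in auto)
  next
    case 2
    show ?thesis
      by (rule that[of "-1"]) (use 2 unit velocity in auto)
  qed
  have inner_tangent: "inner (?tangent s) d = \<sigma> * inner (U s) d" if "s \<in> I" for s d
    using tangent that by simp
  show ?thesis
  proof
    assume "general_helix I \<gamma>"
    then obtain d c where "norm d = 1" "\<forall>s\<in>I. inner (?tangent s) d = c"
      unfolding general_helix_def by blast
    then have "\<forall>s\<in>I. inner (U s) d = \<sigma> * c"
      using \<sigma> inner_tangent by force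
    then show "isophote I U"
      unfolding isophote_def using \<open>norm d = 1\<close> by blast
  next
    assume "isophote I U"
    then obtain l c where "norm l = 1" "\<forall>s\<in>I. inner (U s) l = c"
      unfolding isophote_def by blast
    then have "\<forall>s\<in>I. inner (?tangent s) l = \<sigma> * c"
      using inner_tangent by simp
    then show "general_helix I \<gamma>"
      unfolding general_helix_def using reg \<open>norm l = 1\<close> by blast
  qed
qed

lemma darboux_coefficients_has_real_derivative:
  fixes \<theta> S C :: "real \<Rightarrow> real" and c\<^sub>1 c\<^sub>2 :: real
  assumes \<theta>: "(\<theta> has_real_derivative k) (at s)"
    and S: "(S has_real_derivative sin (\<theta> s)) (at s)"
    and C: "(C has_real_derivative cos (\<theta> s)) (at s)"
  defines "y\<^sub>1 \<equiv> \<lambda>s. - sin (\<theta> s) * (S s - c\<^sub>1) - cos (\<theta> s) * (C s + c\<^sub>2)"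
    and "y\<^sub>2 \<equiv> \<lambda>s. c\<^sub>1 * cos (\<theta> s) + c\<^sub>2 * sin (\<theta> s) - S s * cos (\<theta> s) + C s * sin (\<theta> s)"
  shows "(y\<^sub>1 has_real_derivative k * y\<^sub>2 s - 1) (at s)"
    and "(y\<^sub>2 has_real_derivative - k * y\<^sub>1 s) (at s)"
proof -
  have "(y\<^sub>1 has_real_derivative
      - (cos (\<theta> s) * k) * (S s - c\<^sub>1) - sin (\<theta> s) * sin (\<theta> s)
      - (- (sin (\<theta> s) * k) * (C s + c\<^sub>2) + cos (\<theta> s) * cos (\<theta> s))) (at s)"
    unfolding y\<^sub>1_def using \<theta> S C by (auto intro!: derivative_eq_intros)
  moreover have "- (cos (\<theta> s) * k) * (S s - c\<^sub>1) - sin (\<theta> s) * sin (\<theta> s)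
      - (- (sin (\<theta> s) * k) * (C s + c\<^sub>2) + cos (\<theta> s) * cos (\<theta> s)) = k * y\<^sub>2 s - 1"
    unfolding y\<^sub>2_def using sin_cos_squared_add[of "\<theta> s"]
    by (simp add: algebra_simps power2_eq_square)
  ultimately show "(y\<^sub>1 has_real_derivative k * y\<^sub>2 s - 1) (at s)"
    by simp
  have "(y\<^sub>2 has_real_derivative
      c\<^sub>1 * (- sin (\<theta> s) * k) + c\<^sub>2 * (cos (\<theta> s) * k)
      - (sin (\<theta> s) * cos (\<theta> s) + S s * (- sin (\<theta> s) * k))
      + (cos (\<theta> s) * sin (\<theta> s) + C s * (cos (\<theta> s) * k))) (at s)"
    unfolding y\<^sub>2_def using \<theta> S C by (auto intro!: derivative_eq_intros)
  then show "(y\<^sub>2 has_real_derivative - k * y\<^sub>1 s) (at s)"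
    unfolding y\<^sub>1_def by (simp add: algebra_simps)
qed

lemma darboux_combination_velocity:
  assumes "open I" and frame: "darboux_frame I \<alpha> T V U kg kn tg"
    and \<gamma>: "\<forall>s\<in>I. \<gamma> s = \<alpha> s + y\<^sub>1 s *\<^sub>R T s + y\<^sub>2 s *\<^sub>R V s"
    and y\<^sub>1: "(y\<^sub>1 has_real_derivative kg s * y\<^sub>2 s - 1) (at s)"
    and y\<^sub>2: "(y\<^sub>2 has_real_derivative - kg s * y\<^sub>1 s) (at s)"
    and "s \<in> I"
  shows "vector_derivative \<gamma> (at s) = (y\<^sub>1 s * kn s + y\<^sub>2 s * tg s) *\<^sub>R U s"
proof -
  let ?\<gamma>' = "T s + (y\<^sub>1 s *\<^sub>R (kg s *\<^sub>R V s + kn s *\<^sub>R U s) + (kg s * y\<^sub>2 s - 1) *\<^sub>R T s)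
    + (y\<^sub>2 s *\<^sub>R (- kg s *\<^sub>R T s + tg s *\<^sub>R U s) + (- kg s * y\<^sub>1 s) *\<^sub>R V s)"
  have "(\<alpha> has_vector_derivative T s) (at s)"
    and "(T has_vector_derivative kg s *\<^sub>R V s + kn s *\<^sub>R U s) (at s)"
    and "(V has_vector_derivative - kg s *\<^sub>R T s + tg s *\<^sub>R U s) (at s)"
    using frame \<open>s \<in> I\<close> unfolding darboux_frame_def by auto
  then have "((\<lambda>s. \<alpha> s + y\<^sub>1 s *\<^sub>R T s + y\<^sub>2 s *\<^sub>R V s) has_vector_derivative ?\<gamma>') (at s)"
    using y\<^sub>1 y\<^sub>2 by (intro has_vector_derivative_add has_vector_derivative_scaleR)
  then have "(\<gamma> has_vector_derivative ?\<gamma>') (at s)"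
    by (rule has_vector_derivative_transform_within_open[OF _ \<open>open I\<close> \<open>s \<in> I\<close>])
      (use \<gamma> in auto)
  then have "vector_derivative \<gamma> (at s) = ?\<gamma>'"
    by (rule vector_derivative_at)
  also have "?\<gamma>' = (y\<^sub>1 s * kn s + y\<^sub>2 s * tg s) *\<^sub>R U s"
    by (simp add: algebra_simps)
  finally show ?thesis .
qed

theorem theorem3p30:
  fixes I :: "real set"
    and \<alpha> T V U \<gamma> :: "real \<Rightarrow> real^3"
    and kg kn tg :: "real \<Rightarrow> real"
  assumes I: "is_interval I" "open I"
    and frame: "darboux_frame I \<alpha> T V U kg kn tg"
    and cases:
      "(\<exists>c10 c11. (\<forall>s\<in>I. kg s = 0) \<and>
          (\<forall>s\<in>I. \<gamma> s = \<alpha> s + (c10 - s) *\<^sub>R T s + c11 *\<^sub>R V s))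
       \<or> (\<exists>\<theta> S C c12 c13. (\<forall>s\<in>I. kg s \<noteq> 0) \<and>
          (\<forall>s\<in>I. (\<theta> has_real_derivative kg s) (at s)) \<and>
          (\<forall>s\<in>I. (S has_real_derivative sin (\<theta> s)) (at s)) \<and>
          (\<forall>s\<in>I. (C has_real_derivative cos (\<theta> s)) (at s)) \<and>
          (\<forall>s\<in>I. \<gamma> s = \<alpha> s
              + (- sin (\<theta> s) * (S s - c12) - cos (\<theta> s) * (C s + c13)) *\<^sub>R T s
              + (c12 * cos (\<theta> s) + c13 * sin (\<theta> s) - S s * cos (\<theta> s) + C s * sin (\<theta> s)) *\<^sub>R V s))"
    and reg: "regular_curve I \<gamma>"
  shows "general_helix I \<gamma> \<longleftrightarrow> isophote I U"
proof -
  have kn_tg: "continuous_on I kn" "continuous_on I tg" and unit: "\<forall>s\<in>I. norm (U s) = 1"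
    using frame unfolding darboux_frame_def by auto
  obtain y\<^sub>1 y\<^sub>2 where \<gamma>: "\<forall>s\<in>I. \<gamma> s = \<alpha> s + y\<^sub>1 s *\<^sub>R T s + y\<^sub>2 s *\<^sub>R V s"
    and y\<^sub>1: "\<And>s. s \<in> I \<Longrightarrow> (y\<^sub>1 has_real_derivative kg s * y\<^sub>2 s - 1) (at s)"
    and y\<^sub>2: "\<And>s. s \<in> I \<Longrightarrow> (y\<^sub>2 has_real_derivative - kg s * y\<^sub>1 s) (at s)"
    using cases
  proof (elim disjE exE conjE)
    fix c10 c11
    assume "\<forall>s\<in>I. kg s = 0" "\<forall>s\<in>I. \<gamma> s = \<alpha> s + (c10 - s) *\<^sub>R T s + c11 *\<^sub>R V s"
    then show thesis
      by (intro that[of "\<lambda>s. c10 - s" "\<lambda>_. c11"]) (auto intro!: derivative_eq_intros)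
  next
    fix \<theta> S C c12 c13
    assume \<theta>: "\<forall>s\<in>I. (\<theta> has_real_derivative kg s) (at s)"
      and S: "\<forall>s\<in>I. (S has_real_derivative sin (\<theta> s)) (at s)"
      and C: "\<forall>s\<in>I. (C has_real_derivative cos (\<theta> s)) (at s)"
      and \<gamma>: "\<forall>s\<in>I. \<gamma> s = \<alpha> s
              + (- sin (\<theta> s) * (S s - c12) - cos (\<theta> s) * (C s + c13)) *\<^sub>R T s
              + (c12 * cos (\<theta> s) + c13 * sin (\<theta> s) - S s * cos (\<theta> s) + C s * sin (\<theta> s)) *\<^sub>R V s"
    show thesis
      using \<theta> S C darboux_coefficients_has_real_derivative by (intro that[OF \<gamma>]) blast+
  qed
  have "continuous_on I (\<lambda>s. y\<^sub>1 s * kn s + y\<^sub>2 s * tg s)"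
    using y\<^sub>1 y\<^sub>2 DERIV_isCont
    by (intro continuous_intros kn_tg continuous_at_imp_continuous_on ballI) blast+
  moreover have "\<forall>s\<in>I. vector_derivative \<gamma> (at s) = (y\<^sub>1 s * kn s + y\<^sub>2 s * tg s) *\<^sub>R U s"
    using darboux_combination_velocity[OF I(2) frame \<gamma> y\<^sub>1 y\<^sub>2] by blast
  ultimately show ?thesis
    by (rule general_helix_iff_isophote_if_normal_velocity[OF I(1) _ unit _ reg])
qed

end
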